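(* Let $1\le k\le d\le n-1$ and let $(M,\{W_j\},\{S_i^j\})$ be an exact-repair regenerating code of type $(n,k,d)$ with parameters $(B,\alpha,\beta)$. Let $L\subseteq R\subseteq\{1,\ldots,n\}$ and $M'\subseteq\{1,\ldots,n\}$ with $R\cap M'=\emptyset$, $|L|=\ell\ge1$, $|M'|=m$, $|R|=r$, and $r+m\le k$. Then \[ H(W_R\mid W_{M'})+(\ell-1)H(W_R)+H(S_{M'}^{L})\;\le\;\ell\,(r\alpha+\beta)+\ell\big((d-r)\beta-\alpha\big). \]
   Context: Fix integers $1\le k\le d\le n-1$. An exact-repair regenerating code of type $(n,k,d)$ with parameters $(B,\alpha,\beta)$ (nonnegative reals) is a collection of jointly distributed discrete random variables $M$, $W_j$ ($1\le j\le n$), $S_i^j$ ($1\le i,j\le n$, $i\neq j$) such that, with $H$ denoting Shannon entropy: $H(M)=B$; $H(W_j)=\alpha$ and $H(W_j\mid M)=0$ for all $j$; $H(M\mid W_J)=0$ for every $J\subseteq\{1,\dots,n\}$ with $|J|\ge k$; $H(S_i^j)=\beta$ and $H(S_i^j\mid W_i)=0$ for all $i\ne j$; and $H(W_j\mid S_I^j)=0$ for every $I\subseteq\{1,\dots,n\}\setminus\{j\}$ with $|I|\ge d$. Notation: for a set $J$, $W_J=(W_j)_{j\in J}$; for sets $I,J$, $S_I^J=(S_i^j)_{i\in I,\,j\in J,\,i\neq j}$ and $S_I^j=S_I^{\{j\}}$. (The set $M'$ of node indices is unrelated to the random variable $M$.) *)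

theory Defs
  imports "HOL-Probability.Probability"
begin

text \<open>Shannon entropy (base 2),
  valued in ennreal so that infinite entropy is represented faithfully.\<close>

definition ent :: "'o pmf \<Rightarrow> ('o \<Rightarrow> 'a) \<Rightarrow> ennreal" where
  "ent p X = (\<integral>\<^sup>+ \<omega>. ennreal (- log 2 (pmf (map_pmf X p) (X \<omega>))) \<partial>(measure_pmf p))"

definition cond_ent :: "'o pmf \<Rightarrow> ('o \<Rightarrow> 'a) \<Rightarrow> ('o \<Rightarrow> 'b) \<Rightarrow> ennreal" where
  "cond_ent p X Y = (\<integral>\<^sup>+ \<omega>. ennreal (- log 2
      (pmf (map_pmf (\<lambda>\<omega>. (X \<omega>, Y \<omega>)) p) (X \<omega>, Y \<omega>) / pmf (map_pmf Y p) (Y \<omega>)))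
     \<partial>(measure_pmf p))"

definition Wset :: "(nat \<Rightarrow> 'o \<Rightarrow> 'w) \<Rightarrow> nat set \<Rightarrow> 'o \<Rightarrow> (nat \<Rightarrow> 'w)" where
  "Wset W J = (\<lambda>\<omega> j. if j \<in> J then W j \<omega> else undefined)"

definition Sset :: "(nat \<Rightarrow> nat \<Rightarrow> 'o \<Rightarrow> 's) \<Rightarrow> nat set \<Rightarrow> nat set \<Rightarrow> 'o \<Rightarrow> (nat \<times> nat \<Rightarrow> 's)" where
  "Sset S I J = (\<lambda>\<omega> (i, j). if i \<in> I \<and> j \<in> J \<and> i \<noteq> j then S i j \<omega> else undefined)"

definition regen_code ::
  "nat \<Rightarrow> nat \<Rightarrow> nat \<Rightarrow> real \<Rightarrow> real \<Rightarrow> real \<Rightarrow> 'o pmf \<Rightarrow> ('o \<Rightarrow> 'm) \<Rightarrow>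
   (nat \<Rightarrow> 'o \<Rightarrow> 'w) \<Rightarrow> (nat \<Rightarrow> nat \<Rightarrow> 'o \<Rightarrow> 's) \<Rightarrow> bool" where
  "regen_code n k d B \<alpha> \<beta> p M W S \<longleftrightarrow>
     B \<ge> 0 \<and> \<alpha> \<ge> 0 \<and> \<beta> \<ge> 0 \<and>
     ent p M = ennreal B \<and>
     (\<forall>j\<in>{1..n}. ent p (W j) = ennreal \<alpha> \<and> cond_ent p (W j) M = 0) \<and>
     (\<forall>J. J \<subseteq> {1..n} \<and> card J \<ge> k \<longrightarrow> cond_ent p M (Wset W J) = 0) \<and>
     (\<forall>i\<in>{1..n}. \<forall>j\<in>{1..n}. i \<noteq> j \<longrightarrow>
        ent p (S i j) = ennreal \<beta> \<and> cond_ent p (S i j) (W i) = 0) \<and>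
     (\<forall>j\<in>{1..n}. \<forall>I. I \<subseteq> {1..n} - {j} \<and> card I \<ge> d \<longrightarrow>
        cond_ent p (W j) (Sset S I {j}) = 0)"

end

theory Submission
  imports Defs
begin

(* Write W_R for the stored contents of the nodes in R and S_{M'}^j for the
   messages sent by the nodes of M' to node j.  The theorem follows from three facts:
   (1) S_{M'}^L is a function of W_{M'}, and conditioning on less information can only
       increase conditional entropy, so H(W_R | W_{M'}) + H(S_{M'}^L) <= H(W_R, S_{M'}^L);
   (2) submodularity of entropy, applied once for every j in L, gives
       H(W_R, S_{M'}^L) + (l - 1) H(W_R) <= sum_{j in L} H(W_R, S_{M'}^j);
   (3) for j in L, the pair (W_R, S_{M'}^j) is a function of W_{R-{j}}, S_{M'}^j and the messages
       to j from d + 1 - r - m further helpers, because these d helpers can repair W_j; hence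
       H(W_R, S_{M'}^j) <= (r - 1) alpha + (d - r + 1) beta. *)

definition atom_prob :: "'o pmf \<Rightarrow> ('o \<Rightarrow> 'a) \<Rightarrow> 'o \<Rightarrow> real" where
  "atom_prob p X \<omega> = measure_pmf.prob p {\<omega>'. X \<omega>' = X \<omega>}"

definition determined_by :: "'o pmf \<Rightarrow> ('o \<Rightarrow> 'a) \<Rightarrow> ('o \<Rightarrow> 'b) \<Rightarrow> bool" where
  "determined_by p X Y \<longleftrightarrow>
     (\<forall>\<omega>\<in>set_pmf p. \<forall>\<omega>'\<in>set_pmf p. Y \<omega> = Y \<omega>' \<longrightarrow> X \<omega> = X \<omega>')"

definition same_info :: "'o pmf \<Rightarrow> ('o \<Rightarrow> 'a) \<Rightarrow> ('o \<Rightarrow> 'b) \<Rightarrow> bool" where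
  "same_info p X Y \<longleftrightarrow> determined_by p X Y \<and> determined_by p Y X"

lemma same_info_iff:
  "same_info p X Y \<longleftrightarrow> (\<forall>\<omega>\<in>set_pmf p. \<forall>\<omega>'\<in>set_pmf p. X \<omega> = X \<omega>' \<longleftrightarrow> Y \<omega> = Y \<omega>')"
  unfolding same_info_def determined_by_def by blast

lemma ent_atom_prob: "ent p X = (\<integral>\<^sup>+\<omega>. ennreal (- log 2 (atom_prob p X \<omega>)) \<partial>p)"
  unfolding ent_def atom_prob_def pmf_map by (simp add: vimage_def)

lemma cond_ent_atom_prob: "cond_ent p X Y =
  (\<integral>\<^sup>+\<omega>. ennreal (- log 2 (atom_prob p (\<lambda>\<omega>. (X \<omega>, Y \<omega>)) \<omega> / atom_prob p Y \<omega>)) \<partial>p)"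
  unfolding cond_ent_def atom_prob_def pmf_map by (simp add: vimage_def)

lemma atom_prob_pos: "\<omega> \<in> set_pmf p \<Longrightarrow> 0 < atom_prob p X \<omega>"
proof -
  assume "\<omega> \<in> set_pmf p"
  then have "0 < pmf p \<omega>" by (simp add: pmf_positive)
  also have "pmf p \<omega> = measure_pmf.prob p {\<omega>}" by (simp add: measure_pmf_single)
  also have "\<dots> \<le> atom_prob p X \<omega>" unfolding atom_prob_def
    by (rule measure_pmf.finite_measure_mono) auto
  finally show ?thesis .
qed

lemma atom_prob_le_1: "atom_prob p X \<omega> \<le> 1"
  unfolding atom_prob_def by simp

lemma atom_prob_mono:
  assumes "determined_by p X Y" "\<omega> \<in> set_pmf p"
  shows "atom_prob p Y \<omega> \<le> atom_prob p X \<omega>"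
proof -
  have "atom_prob p Y \<omega> = measure_pmf.prob p ({\<omega>'. Y \<omega>' = Y \<omega>} \<inter> set_pmf p)"
    unfolding atom_prob_def by (rule measure_pmf.finite_measure_eq_AE) (auto intro!: AE_pmfI)
  also have "\<dots> \<le> atom_prob p X \<omega>" unfolding atom_prob_def
  proof (rule measure_pmf.finite_measure_mono)
    show "{\<omega>'. Y \<omega>' = Y \<omega>} \<inter> set_pmf p \<subseteq> {\<omega>'. X \<omega>' = X \<omega>}"
      using assms unfolding determined_by_def by blast
  qed simp
  finally show ?thesis .
qed

lemma atom_prob_pair_le: "atom_prob p (\<lambda>\<omega>. (X \<omega>, Y \<omega>)) \<omega> \<le> atom_prob p Y \<omega>"
  unfolding atom_prob_def by (rule measure_pmf.finite_measure_mono) auto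

lemma atom_prob_same_info: "same_info p X Y \<Longrightarrow> \<omega> \<in> set_pmf p \<Longrightarrow> atom_prob p X \<omega> = atom_prob p Y \<omega>"
  unfolding same_info_def by (simp add: antisym atom_prob_mono)

lemma ent_mono_determined: "determined_by p X Y \<Longrightarrow> ent p X \<le> ent p Y"
  unfolding ent_atom_prob
proof (intro nn_integral_mono_AE AE_pmfI ennreal_leI)
  fix \<omega> assume "determined_by p X Y" "\<omega> \<in> set_pmf p"
  then have "atom_prob p Y \<omega> \<le> atom_prob p X \<omega>" "0 < atom_prob p Y \<omega>"
    by (auto simp: atom_prob_mono atom_prob_pos)
  then show "- log 2 (atom_prob p X \<omega>) \<le> - log 2 (atom_prob p Y \<omega>)" by simp
qed

lemma ent_same_info: "same_info p X Y \<Longrightarrow> ent p X = ent p Y"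
  unfolding same_info_def by (intro antisym ent_mono_determined) auto

lemma cond_ent_same_info:
  assumes "same_info p X X'" "same_info p Y Y'"
  shows "cond_ent p X Y = cond_ent p X' Y'"
proof -
  have "same_info p (\<lambda>\<omega>. (X \<omega>, Y \<omega>)) (\<lambda>\<omega>. (X' \<omega>, Y' \<omega>))"
    using assms unfolding same_info_iff by auto
  then show ?thesis unfolding cond_ent_atom_prob
    by (intro nn_integral_cong_AE AE_pmfI) (simp add: atom_prob_same_info[OF assms(2)] atom_prob_same_info)
qed

lemma ent_const: "ent p (\<lambda>_. c) = 0"
  unfolding ent_atom_prob atom_prob_def by simp

lemma cond_ent_const: "cond_ent p X (\<lambda>_. c) = ent p X"
  unfolding cond_ent_atom_prob ent_atom_prob atom_prob_def by simp

lemma ent_pair_chain: "ent p (\<lambda>\<omega>. (X \<omega>, Y \<omega>)) = ent p Y + cond_ent p X Y"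
  unfolding ent_atom_prob cond_ent_atom_prob
proof (subst nn_integral_add[symmetric], simp, simp, intro nn_integral_cong_AE AE_pmfI)
  fix \<omega> assume w: "\<omega> \<in> set_pmf p"
  define a where "a = atom_prob p (\<lambda>\<omega>. (X \<omega>, Y \<omega>)) \<omega>"
  define b where "b = atom_prob p Y \<omega>"
  have ab: "0 < a" "a \<le> b" "b \<le> 1" unfolding a_def b_def
    by (rule atom_prob_pos[OF w], rule atom_prob_pair_le, rule atom_prob_le_1)
  have "- log 2 a = - log 2 b + - log 2 (a / b)" using ab by (simp add: log_divide)
  moreover have "0 \<le> - log 2 b" "0 \<le> - log 2 (a / b)" using ab by auto
  ultimately show "ennreal (- log 2 a) = ennreal (- log 2 b) + ennreal (- log 2 (a / b))"
    using ennreal_plus[of "- log 2 b" "- log 2 (a / b)"] by metis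
qed

text \<open>Zero conditional entropy means functional dependence: if \<open>X\<close> took two values on one
  atom of \<open>Y\<close>, the atom of \<open>(X,Y)\<close> at one of them would be strictly smaller than that of \<open>Y\<close>.\<close>
lemma determined_by_if_cond_ent_zero:
  assumes "cond_ent p X Y = 0"
  shows "determined_by p X Y"
  unfolding determined_by_def
proof (intro ballI impI, rule ccontr)
  fix \<omega> \<omega>' assume w: "\<omega> \<in> set_pmf p" "\<omega>' \<in> set_pmf p" "Y \<omega> = Y \<omega>'" "X \<omega> \<noteq> X \<omega>'"
  define a where "a = atom_prob p (\<lambda>\<omega>. (X \<omega>, Y \<omega>)) \<omega>"
  define b where "b = atom_prob p Y \<omega>"
  have ab: "0 < a" "0 < b" unfolding a_def b_def by (rule atom_prob_pos[OF w(1)])+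
  have "AE \<omega> in p. ennreal (- log 2 (atom_prob p (\<lambda>\<omega>. (X \<omega>, Y \<omega>)) \<omega> / atom_prob p Y \<omega>)) = 0"
    using assms unfolding cond_ent_atom_prob by (subst (asm) nn_integral_0_iff_AE) auto
  then have "- log 2 (a / b) \<le> 0"
    using w(1) unfolding a_def b_def by (simp add: AE_measure_pmf_iff ennreal_eq_0_iff)
  then have "b \<le> a" using ab by (simp add: zero_le_log_cancel_iff)
  moreover have "a + pmf p \<omega>' \<le> b"
  proof -
    have "a + pmf p \<omega>' = measure_pmf.prob p ({\<omega>''. X \<omega>'' = X \<omega> \<and> Y \<omega>'' = Y \<omega>} \<union> {\<omega>'})"
      unfolding a_def atom_prob_def using w
      by (subst measure_pmf.finite_measure_Union) (auto simp: measure_pmf_single)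
    also have "\<dots> \<le> b" unfolding b_def atom_prob_def
      by (rule measure_pmf.finite_measure_mono) (use w in auto)
    finally show ?thesis .
  qed
  moreover have "0 < pmf p \<omega>'" using w by (simp add: pmf_positive)
  ultimately show False by simp
qed

lemma nn_integral_pmf_ratio_le_1:
  "(\<integral>\<^sup>+\<omega>. ennreal (pmf q (T \<omega>)) / ennreal (pmf (map_pmf T p) (T \<omega>)) \<partial>measure_pmf p) \<le> 1"
proof -
  define Q where "Q = map_pmf T p"
  have "(\<integral>\<^sup>+\<omega>. ennreal (pmf q (T \<omega>)) / ennreal (pmf (map_pmf T p) (T \<omega>)) \<partial>p)
      = (\<integral>\<^sup>+t. ennreal (pmf q t) / ennreal (pmf Q t) \<partial>measure_pmf Q)"
    unfolding Q_def by simp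
  also have "\<dots> = (\<integral>\<^sup>+t. ennreal (pmf Q t) * (ennreal (pmf q t) / ennreal (pmf Q t)) \<partial>count_space UNIV)"
    by (rule nn_integral_measure_pmf)
  also have "\<dots> \<le> (\<integral>\<^sup>+t. ennreal (pmf q t) \<partial>count_space UNIV)"
  proof (rule nn_integral_mono)
    fix t
    show "ennreal (pmf Q t) * (ennreal (pmf q t) / ennreal (pmf Q t)) \<le> ennreal (pmf q t)"
    proof (cases "pmf Q t = 0")
      case False
      then show ?thesis
        unfolding ennreal_times_divide mult.commute[of "ennreal (pmf Q t)"]
        by (subst ennreal_mult_divide_eq) auto
    qed simp
  qed
  also have "\<dots> = 1" by (simp add: nn_integral_pmf)
  finally show ?thesis .
qed

text \<open>The distribution of \<open>(X, Y, Z')\<close> where \<open>Z'\<close> is drawn from the law of \<open>Z\<close> given \<open>Y\<close>,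
  independently of \<open>X\<close>; it is the reference distribution for Gibbs' inequality below.\<close>
definition cond_indep_coupling ::
  "'o pmf \<Rightarrow> ('o \<Rightarrow> 'a) \<Rightarrow> ('o \<Rightarrow> 'b) \<Rightarrow> ('o \<Rightarrow> 'c) \<Rightarrow> ('a \<times> 'b \<times> 'c) pmf" where
  "cond_indep_coupling p X Y Z = bind_pmf (map_pmf (\<lambda>\<omega>. (X \<omega>, Y \<omega>)) p)
      (\<lambda>(x, y). map_pmf (\<lambda>\<omega>. (x, y, Z \<omega>)) (cond_pmf p {\<omega>. Y \<omega> = y}))"

lemma pmf_cond_indep_coupling:
  assumes w: "\<omega> \<in> set_pmf p"
  shows "ennreal (pmf (cond_indep_coupling p X Y Z) (X \<omega>, Y \<omega>, Z \<omega>))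
    = ennreal (atom_prob p (\<lambda>\<omega>. (X \<omega>, Y \<omega>)) \<omega> * atom_prob p (\<lambda>\<omega>. (Y \<omega>, Z \<omega>)) \<omega> / atom_prob p Y \<omega>)"
proof -
  define s where "s = {\<omega>'. Y \<omega>' = Y \<omega>}"
  have ne: "set_pmf p \<inter> s \<noteq> {}" using w unfolding s_def by auto
  define c where "c = emeasure (cond_pmf p s) {\<omega>'. Z \<omega>' = Z \<omega>}"
  define a1 where "a1 = measure_pmf.prob p {\<omega>'. Y \<omega>' = Y \<omega> \<and> Z \<omega>' = Z \<omega>}"
  define a2 where "a2 = measure_pmf.prob p {\<omega>'. X \<omega>' = X \<omega> \<and> Y \<omega>' = Y \<omega>}"
  define a3 where "a3 = measure_pmf.prob p s"
  have a3: "0 < a3" using atom_prob_pos[OF w] unfolding a3_def atom_prob_def s_def .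
  have "ennreal (pmf (cond_indep_coupling p X Y Z) (X \<omega>, Y \<omega>, Z \<omega>))
    = (\<integral>\<^sup>+\<omega>'. ennreal (pmf (map_pmf (\<lambda>\<omega>''. (X \<omega>', Y \<omega>', Z \<omega>''))
          (cond_pmf p {\<omega>''. Y \<omega>'' = Y \<omega>'})) (X \<omega>, Y \<omega>, Z \<omega>)) \<partial>p)"
    by (simp add: cond_indep_coupling_def ennreal_pmf_bind)
  also have "\<dots> = (\<integral>\<^sup>+\<omega>'. c * indicator {\<omega>'. X \<omega>' = X \<omega> \<and> Y \<omega>' = Y \<omega>} \<omega>' \<partial>p)"
  proof (intro nn_integral_cong)
    fix \<omega>'
    show "ennreal (pmf (map_pmf (\<lambda>\<omega>''. (X \<omega>', Y \<omega>', Z \<omega>'')) (cond_pmf p {\<omega>''. Y \<omega>'' = Y \<omega>'}))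
        (X \<omega>, Y \<omega>, Z \<omega>)) = c * indicator {\<omega>'. X \<omega>' = X \<omega> \<and> Y \<omega>' = Y \<omega>} \<omega>'"
      by (cases "X \<omega>' = X \<omega> \<and> Y \<omega>' = Y \<omega>") (auto simp: c_def s_def ennreal_pmf_map vimage_def)
  qed
  also have "\<dots> = c * emeasure p {\<omega>'. X \<omega>' = X \<omega> \<and> Y \<omega>' = Y \<omega>}"
    by (simp add: nn_integral_cmult_indicator)
  also have "\<dots> = ennreal a1 / ennreal a3 * ennreal a2"
  proof -
    have "s \<inter> {\<omega>'. Z \<omega>' = Z \<omega>} = {\<omega>'. Y \<omega>' = Y \<omega> \<and> Z \<omega>' = Z \<omega>}" unfolding s_def by auto
    then have "c = ennreal a1 / ennreal a3"
      unfolding c_def a1_def a3_def by (simp add: cond_pmf.rep_eq[OF ne] measure_pmf.emeasure_eq_measure)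
    then show ?thesis unfolding a2_def by (simp add: measure_pmf.emeasure_eq_measure)
  qed
  also have "\<dots> = ennreal (a1 / a3 * a2)"
    using a3 by (simp add: divide_ennreal ennreal_mult[symmetric] a1_def a2_def)
  also have "a1 / a3 * a2 = atom_prob p (\<lambda>\<omega>. (X \<omega>, Y \<omega>)) \<omega> * atom_prob p (\<lambda>\<omega>. (Y \<omega>, Z \<omega>)) \<omega> / atom_prob p Y \<omega>"
    unfolding a1_def a2_def a3_def atom_prob_def s_def by simp
  finally show ?thesis .
qed

text \<open>The pointwise inequality behind Gibbs' argument, \<open>- ln a + 1 \<le> - ln b + b / a\<close>, i.e.
  \<open>ln (b/a) \<le> b/a - 1\<close>, phrased in bits and in \<open>ennreal\<close>.\<close>
lemma neg_log_ennreal_ratio_ineq: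
  fixes a b :: real
  assumes "0 < a" "a \<le> 1" "0 < b" "b \<le> 1"
  shows "ennreal (ln 2) * ennreal (- log 2 a) + 1 \<le> ennreal (ln 2) * ennreal (- log 2 b) + ennreal (b / a)"
proof -
  define x y where "x = - log 2 a" and "y = - log 2 b"
  have nonneg: "0 \<le> x" "0 \<le> y" "0 \<le> b / a" "0 \<le> ln (2::real)"
    using assms unfolding x_def y_def by auto
  have "ln (b / a) \<le> b / a - 1" using assms by (intro ln_le_minus_one) auto
  then have "ln 2 * x + 1 \<le> ln 2 * y + b / a"
    using assms unfolding x_def y_def by (simp add: log_def ln_div)
  then have "ennreal (ln 2 * x + 1) \<le> ennreal (ln 2 * y + b / a)" by (rule ennreal_leI)
  then show ?thesis unfolding x_def[symmetric] y_def[symmetric] using nonneg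
    by (simp only: ennreal_plus ennreal_mult mult_nonneg_nonneg ennreal_1 zero_le_one)
qed

text \<open>Integrating the pointwise
  inequality above, the ratio term integrates to at most 1 by Gibbs' inequality applied to the
  conditionally independent coupling.\<close>
lemma cond_ent_cond_more_le: "cond_ent p X (\<lambda>\<omega>. (Y \<omega>, Z \<omega>)) \<le> cond_ent p X Y"
proof -
  define T where "T = (\<lambda>\<omega>. (X \<omega>, Y \<omega>, Z \<omega>))"
  define q where "q = cond_indep_coupling p X Y Z"
  define a where "a = (\<lambda>\<omega>. atom_prob p (\<lambda>\<omega>. (X \<omega>, Y \<omega>, Z \<omega>)) \<omega> / atom_prob p (\<lambda>\<omega>. (Y \<omega>, Z \<omega>)) \<omega>)"
  define b where "b = (\<lambda>\<omega>. atom_prob p (\<lambda>\<omega>. (X \<omega>, Y \<omega>)) \<omega> / atom_prob p Y \<omega>)"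
  define c where "c = ennreal (ln 2)"
  define H1 where "H1 = cond_ent p X (\<lambda>\<omega>. (Y \<omega>, Z \<omega>))"
  define H2 where "H2 = cond_ent p X Y"
  have H1: "H1 = (\<integral>\<^sup>+\<omega>. ennreal (- log 2 (a \<omega>)) \<partial>p)" unfolding H1_def cond_ent_atom_prob a_def ..
  have H2: "H2 = (\<integral>\<^sup>+\<omega>. ennreal (- log 2 (b \<omega>)) \<partial>p)" unfolding H2_def cond_ent_atom_prob b_def ..
  have pointwise: "c * ennreal (- log 2 (a \<omega>)) + 1 \<le>
      c * ennreal (- log 2 (b \<omega>)) + ennreal (pmf q (T \<omega>)) / ennreal (pmf (map_pmf T p) (T \<omega>))"
    if w: "\<omega> \<in> set_pmf p" for \<omega>
  proof -
    define pxyz where "pxyz = atom_prob p (\<lambda>\<omega>. (X \<omega>, Y \<omega>, Z \<omega>)) \<omega>"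
    define pyz where "pyz = atom_prob p (\<lambda>\<omega>. (Y \<omega>, Z \<omega>)) \<omega>"
    define pxy where "pxy = atom_prob p (\<lambda>\<omega>. (X \<omega>, Y \<omega>)) \<omega>"
    define py where "py = atom_prob p Y \<omega>"
    have pos: "0 < pxyz" "0 < pyz" "0 < pxy" "0 < py" unfolding pxyz_def pyz_def pxy_def py_def
      by (rule atom_prob_pos[OF w])+
    have le: "pxyz \<le> pyz" "pxy \<le> py" unfolding pxyz_def pyz_def pxy_def py_def
      by (rule atom_prob_pair_le)+
    have a: "a \<omega> = pxyz / pyz" and b: "b \<omega> = pxy / py"
      unfolding a_def b_def pxyz_def pyz_def pxy_def py_def by simp_all
    have "pmf (map_pmf T p) (T \<omega>) = pxyz"
      unfolding pmf_map pxyz_def atom_prob_def T_def by (simp add: vimage_def)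
    moreover have "ennreal (pmf q (T \<omega>)) = ennreal (pxy * pyz / py)"
      unfolding q_def T_def pxy_def pyz_def py_def by (rule pmf_cond_indep_coupling[OF w])
    ultimately have "ennreal (pmf q (T \<omega>)) / ennreal (pmf (map_pmf T p) (T \<omega>)) = ennreal (b \<omega> / a \<omega>)"
      using pos by (simp add: divide_ennreal a b field_simps)
    moreover have "0 < a \<omega>" "a \<omega> \<le> 1" "0 < b \<omega>" "b \<omega> \<le> 1" unfolding a b using pos le by auto
    ultimately show ?thesis unfolding c_def by (simp add: neg_log_ennreal_ratio_ineq)
  qed
  have "c * H1 + 1 = (\<integral>\<^sup>+\<omega>. c * ennreal (- log 2 (a \<omega>)) + 1 \<partial>p)"
    unfolding H1 by (simp add: nn_integral_add nn_integral_cmult)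
  also have "\<dots> \<le> (\<integral>\<^sup>+\<omega>. c * ennreal (- log 2 (b \<omega>))
                      + ennreal (pmf q (T \<omega>)) / ennreal (pmf (map_pmf T p) (T \<omega>)) \<partial>p)"
    by (intro nn_integral_mono_AE AE_pmfI pointwise)
  also have "\<dots> = c * H2 + (\<integral>\<^sup>+\<omega>. ennreal (pmf q (T \<omega>)) / ennreal (pmf (map_pmf T p) (T \<omega>)) \<partial>p)"
    unfolding H2 by (simp add: nn_integral_add nn_integral_cmult)
  also have "\<dots> \<le> c * H2 + 1" by (intro add_left_mono nn_integral_pmf_ratio_le_1)
  finally have "c * H1 \<le> c * H2" by (simp add: add.commute ennreal_add_left_cancel_le)
  then have "ennreal (1 / ln 2) * (c * H1) \<le> ennreal (1 / ln 2) * (c * H2)"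
    by (rule mult_left_mono) simp
  then have "(ennreal (1 / ln 2) * c) * H1 \<le> (ennreal (1 / ln 2) * c) * H2"
    by (simp only: mult.assoc)
  moreover have "ennreal (1 / ln 2) * c = 1" unfolding c_def by (simp add: ennreal_mult[symmetric])
  ultimately show ?thesis unfolding H1_def H2_def by simp
qed

lemma cond_ent_le_ent: "cond_ent p X Y \<le> ent p X"
proof -
  have "cond_ent p X Y = cond_ent p X (\<lambda>\<omega>. ((), Y \<omega>))"
    by (rule cond_ent_same_info) (auto simp: same_info_iff)
  also have "\<dots> \<le> cond_ent p X (\<lambda>_. ())" by (rule cond_ent_cond_more_le)
  also have "\<dots> = ent p X" by (rule cond_ent_const)
  finally show ?thesis .
qed

lemma cond_ent_antimono:
  assumes "determined_by p Y' Y"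
  shows "cond_ent p X Y \<le> cond_ent p X Y'"
proof -
  have "cond_ent p X Y = cond_ent p X (\<lambda>\<omega>. (Y' \<omega>, Y \<omega>))"
  proof (rule cond_ent_same_info)
    show "same_info p Y (\<lambda>\<omega>. (Y' \<omega>, Y \<omega>))"
      using assms unfolding same_info_iff prod.inject determined_by_def by blast
  qed (simp add: same_info_iff)
  also have "\<dots> \<le> cond_ent p X Y'" by (rule cond_ent_cond_more_le)
  finally show ?thesis .
qed

lemma ent_pair_subadditive: "ent p (\<lambda>\<omega>. (X \<omega>, Y \<omega>)) \<le> ent p X + ent p Y"
  unfolding ent_pair_chain using cond_ent_le_ent[of p X Y] by (simp add: add.commute add_left_mono)

lemma ent_submodular:
  "ent p (\<lambda>\<omega>. (A \<omega>, B \<omega>, C \<omega>)) + ent p A \<le> ent p (\<lambda>\<omega>. (A \<omega>, B \<omega>)) + ent p (\<lambda>\<omega>. (A \<omega>, C \<omega>))"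
proof -
  have swap3: "ent p (\<lambda>\<omega>. (A \<omega>, B \<omega>, C \<omega>)) = ent p (\<lambda>\<omega>. (B \<omega>, A \<omega>, C \<omega>))"
    by (rule ent_same_info) (auto simp: same_info_iff)
  have swap2: "ent p (\<lambda>\<omega>. (A \<omega>, B \<omega>)) = ent p (\<lambda>\<omega>. (B \<omega>, A \<omega>))"
    by (rule ent_same_info) (auto simp: same_info_iff)
  have "ent p (\<lambda>\<omega>. (A \<omega>, B \<omega>, C \<omega>)) + ent p A
      = ent p (\<lambda>\<omega>. (A \<omega>, C \<omega>)) + cond_ent p B (\<lambda>\<omega>. (A \<omega>, C \<omega>)) + ent p A"
    unfolding swap3 ent_pair_chain[of p B "\<lambda>\<omega>. (A \<omega>, C \<omega>)"] ..
  also have "\<dots> \<le> ent p (\<lambda>\<omega>. (A \<omega>, C \<omega>)) + cond_ent p B A + ent p A"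
    by (intro add_mono cond_ent_cond_more_le order_refl)
  also have "\<dots> = ent p (\<lambda>\<omega>. (A \<omega>, B \<omega>)) + ent p (\<lambda>\<omega>. (A \<omega>, C \<omega>))"
    unfolding swap2 ent_pair_chain[of p B A] by (simp only: ac_simps)
  finally show ?thesis .
qed

lemma ent_tuple_le:
  assumes "finite A" "0 \<le> e" "\<forall>a\<in>A. ent p (F a) \<le> ennreal e"
  shows "ent p (\<lambda>\<omega> a. if a \<in> A then F a \<omega> else undefined) \<le> ennreal (real (card A) * e)"
  using assms
proof (induction A rule: finite_induct)
  case empty
  then show ?case by (simp add: ent_const)
next
  case (insert a A)
  have "ent p (\<lambda>\<omega> x. if x \<in> insert a A then F x \<omega> else undefined)
     = ent p (\<lambda>\<omega>. (F a \<omega>, (\<lambda>x. if x \<in> A then F x \<omega> else undefined)))"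
    by (rule ent_same_info) (auto simp: same_info_iff fun_eq_iff)
  also have "\<dots> \<le> ent p (F a) + ent p (\<lambda>\<omega> x. if x \<in> A then F x \<omega> else undefined)"
    by (rule ent_pair_subadditive)
  also have "\<dots> \<le> ennreal e + ennreal (real (card A) * e)"
    using insert by (intro add_mono) auto
  also have "\<dots> = ennreal (real (card (insert a A)) * e)"
    using insert by (simp add: ennreal_plus[symmetric] algebra_simps del: ennreal_plus)
  finally show ?case .
qed

lemma Wset_eq_iff: "Wset W J \<omega> = Wset W J \<omega>' \<longleftrightarrow> (\<forall>j\<in>J. W j \<omega> = W j \<omega>')"
  unfolding Wset_def by (auto simp: fun_eq_iff)

lemma Sset_eq_iff:
  "Sset S I J \<omega> = Sset S I J \<omega>' \<longleftrightarrow> (\<forall>i\<in>I. \<forall>j\<in>J. i \<noteq> j \<longrightarrow> S i j \<omega> = S i j \<omega>')"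
proof
  assume "Sset S I J \<omega> = Sset S I J \<omega>'"
  then show "\<forall>i\<in>I. \<forall>j\<in>J. i \<noteq> j \<longrightarrow> S i j \<omega> = S i j \<omega>'"
    by (auto simp: Sset_def fun_eq_iff split: if_splits dest!: spec[of _ "(_, _)"])
next
  assume "\<forall>i\<in>I. \<forall>j\<in>J. i \<noteq> j \<longrightarrow> S i j \<omega> = S i j \<omega>'"
  then show "Sset S I J \<omega> = Sset S I J \<omega>'" by (auto simp: Sset_def fun_eq_iff)
qed

lemma ent_Wset_le:
  assumes "finite I" "0 \<le> e" "\<forall>i\<in>I. ent p (W i) \<le> ennreal e"
  shows "ent p (Wset W I) \<le> ennreal (real (card I) * e)"
  unfolding Wset_def by (rule ent_tuple_le[OF assms])

lemma ent_Sset_le: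
  assumes "finite I" "j \<notin> I" "0 \<le> e" "\<forall>i\<in>I. ent p (S i j) \<le> ennreal e"
  shows "ent p (Sset S I {j}) \<le> ennreal (real (card I) * e)"
proof -
  have "same_info p (Sset S I {j}) (\<lambda>\<omega> i. if i \<in> I then S i j \<omega> else undefined)"
    unfolding same_info_iff Sset_eq_iff using assms(2) by (auto simp: fun_eq_iff)
  then have "ent p (Sset S I {j}) = ent p (\<lambda>\<omega> i. if i \<in> I then S i j \<omega> else undefined)"
    by (rule ent_same_info)
  also have "\<dots> \<le> ennreal (real (card I) * e)" by (rule ent_tuple_le[OF assms(1,3,4)])
  finally show ?thesis .
qed

lemma Sset_determined_by_Wset:
  assumes "\<And>i j. i \<in> I \<Longrightarrow> j \<in> J \<Longrightarrow> i \<noteq> j \<Longrightarrow> determined_by p (S i j) (W i)"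
  shows "determined_by p (Sset S I J) (Wset W I)"
  using assms unfolding determined_by_def Sset_eq_iff Wset_eq_iff by blast

lemma ent_pair_Sset_le_sum:
  fixes A :: "'o \<Rightarrow> 'a" and p :: "'o pmf"
  assumes "finite L" "L \<noteq> {}"
  shows "ent p (\<lambda>\<omega>. (A \<omega>, Sset S M' L \<omega>)) + of_nat (card L - 1) * ent p A
     \<le> (\<Sum>j\<in>L. ent p (\<lambda>\<omega>. (A \<omega>, Sset S M' {j} \<omega>)))"
  using assms
proof (induction L rule: finite_ne_induct)
  case (singleton x)
  then show ?case by simp
next
  case (insert a F)
  have split: "ent p (\<lambda>\<omega>. (A \<omega>, Sset S M' (insert a F) \<omega>))
      = ent p (\<lambda>\<omega>. (A \<omega>, Sset S M' F \<omega>, Sset S M' {a} \<omega>))"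
    by (rule ent_same_info) (auto simp: same_info_iff Sset_eq_iff)
  have card: "card (insert a F) - 1 = Suc (card F - 1)"
    using insert by (simp add: Suc_diff_1 card_gt_0_iff)
  have "ent p (\<lambda>\<omega>. (A \<omega>, Sset S M' (insert a F) \<omega>)) + of_nat (card (insert a F) - 1) * ent p A
      = (ent p (\<lambda>\<omega>. (A \<omega>, Sset S M' F \<omega>, Sset S M' {a} \<omega>)) + ent p A)
        + of_nat (card F - 1) * ent p A"
    unfolding split card by (simp add: distrib_right distrib_left ac_simps)
  also have "\<dots> \<le> (ent p (\<lambda>\<omega>. (A \<omega>, Sset S M' F \<omega>)) + ent p (\<lambda>\<omega>. (A \<omega>, Sset S M' {a} \<omega>)))
        + of_nat (card F - 1) * ent p A"
    by (intro add_mono ent_submodular order_refl)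
  also have "\<dots> \<le> ent p (\<lambda>\<omega>. (A \<omega>, Sset S M' {a} \<omega>)) + (\<Sum>j\<in>F. ent p (\<lambda>\<omega>. (A \<omega>, Sset S M' {j} \<omega>)))"
    using insert.IH by (simp add: ac_simps add_left_mono)
  also have "\<dots> = (\<Sum>j\<in>insert a F. ent p (\<lambda>\<omega>. (A \<omega>, Sset S M' {j} \<omega>)))"
    using insert by simp
  finally show ?case .
qed

lemma regen_code_nonneg: "regen_code n k d B \<alpha> \<beta> p M W S \<Longrightarrow> 0 \<le> \<alpha> \<and> 0 \<le> \<beta>"
  unfolding regen_code_def by simp

lemma regen_code_ent_W:
  "regen_code n k d B \<alpha> \<beta> p M W S \<Longrightarrow> j \<in> {1..n} \<Longrightarrow> ent p (W j) = ennreal \<alpha>"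
  unfolding regen_code_def by simp

lemma regen_code_ent_S:
  "regen_code n k d B \<alpha> \<beta> p M W S \<Longrightarrow> i \<in> {1..n} \<Longrightarrow> j \<in> {1..n} \<Longrightarrow> i \<noteq> j
    \<Longrightarrow> ent p (S i j) = ennreal \<beta>"
  unfolding regen_code_def by simp

lemma regen_code_message_determined:
  "regen_code n k d B \<alpha> \<beta> p M W S \<Longrightarrow> i \<in> {1..n} \<Longrightarrow> j \<in> {1..n} \<Longrightarrow> i \<noteq> j
    \<Longrightarrow> determined_by p (S i j) (W i)"
  unfolding regen_code_def by (simp add: determined_by_if_cond_ent_zero)

lemma regen_code_repair:
  "regen_code n k d B \<alpha> \<beta> p M W S \<Longrightarrow> j \<in> {1..n} \<Longrightarrow> I \<subseteq> {1..n} - {j} \<Longrightarrow> d \<le> card I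
    \<Longrightarrow> determined_by p (W j) (Sset S I {j})"
  unfolding regen_code_def by (simp add: determined_by_if_cond_ent_zero)

lemma obtain_extra_helpers:
  assumes "R \<subseteq> {1..n}" "M' \<subseteq> {1..n}" "R \<inter> M' = {}" "j \<in> R"
    and "card R + card M' \<le> d" "d < n"
  obtains D where "D \<subseteq> {1..n} - (R \<union> M')" "card D = d + 1 - card R - card M'"
    and "card ((R - {j}) \<union> M' \<union> D) = d"
proof -
  have fin: "finite R" "finite M'" using assms(1,2) finite_subset by auto
  have "card ({1..n} - (R \<union> M')) = n - (card R + card M')"
    using assms(1-3) fin by (simp add: card_Diff_subset card_Un_disjoint)
  then have "d + 1 - card R - card M' \<le> card ({1..n} - (R \<union> M'))" using assms(5,6) by simp
  then obtain D where D: "D \<subseteq> {1..n} - (R \<union> M')" "card D = d + 1 - card R - card M'"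
    by (rule obtain_subset_with_card_n)
  have "finite D" using D(1) finite_subset by auto
  moreover have "(R - {j}) \<inter> M' = {}" "((R - {j}) \<union> M') \<inter> D = {}" using assms(3) D(1) by auto
  ultimately have "card ((R - {j}) \<union> M' \<union> D) = card (R - {j}) + card M' + card D"
    using fin by (simp add: card_Un_disjoint)
  moreover have "card R \<ge> 1" using fin(1) assms(4) by (auto simp: Suc_le_eq card_gt_0_iff)
  ultimately have "card ((R - {j}) \<union> M' \<union> D) = d"
    using D(2) fin(1) assms(4,5) by simp
  with D show thesis by (rule that)
qed

text \<open>The heart of step (3): the contents \<open>W_{R-{j}}\<close> produce the messages \<open>S_{R-{j}}^j\<close>;
  together with \<open>S_{M'}^j\<close> and \<open>S_D^j\<close> these come from at least \<open>d\<close> helpers, so they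
  repair \<open>W_j\<close>.\<close>
lemma repair_inputs_determine:
  assumes reg: "regen_code n k d B \<alpha> \<beta> p M W S"
    and "R \<subseteq> {1..n}" "j \<in> R" "M' \<union> D \<subseteq> {1..n} - {j}"
    and "d \<le> card ((R - {j}) \<union> M' \<union> D)"
  shows "determined_by p (\<lambda>\<omega>. (Wset W R \<omega>, Sset S M' {j} \<omega>))
           (\<lambda>\<omega>. (Wset W (R - {j}) \<omega>, Sset S M' {j} \<omega>, Sset S D {j} \<omega>))"
  unfolding determined_by_def
proof (intro ballI impI)
  fix \<omega> \<omega>' assume w: "\<omega> \<in> set_pmf p" "\<omega>' \<in> set_pmf p"
    and same: "(Wset W (R - {j}) \<omega>, Sset S M' {j} \<omega>, Sset S D {j} \<omega>)
             = (Wset W (R - {j}) \<omega>', Sset S M' {j} \<omega>', Sset S D {j} \<omega>')"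
  define I where "I = (R - {j}) \<union> M' \<union> D"
  have j: "j \<in> {1..n}" using assms(2,3) by auto
  have I: "I \<subseteq> {1..n} - {j}" unfolding I_def using assms(2,4) by auto
  have W_rest: "Wset W (R - {j}) \<omega> = Wset W (R - {j}) \<omega>'"
    and S_M': "Sset S M' {j} \<omega> = Sset S M' {j} \<omega>'" and S_D: "Sset S D {j} \<omega> = Sset S D {j} \<omega>'"
    using same by simp_all
  have "determined_by p (Sset S (R - {j}) {j}) (Wset W (R - {j}))"
    using assms(2) j by (intro Sset_determined_by_Wset regen_code_message_determined[OF reg]) auto
  then have "Sset S (R - {j}) {j} \<omega> = Sset S (R - {j}) {j} \<omega>'"
    using W_rest w unfolding determined_by_def by blast
  then have "Sset S I {j} \<omega> = Sset S I {j} \<omega>'"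
    using S_M' S_D unfolding I_def Sset_eq_iff by blast
  moreover have "determined_by p (W j) (Sset S I {j})"
    using regen_code_repair[OF reg j I] assms(5) unfolding I_def by simp
  ultimately have "W j \<omega> = W j \<omega>'" using w unfolding determined_by_def by blast
  then have "Wset W R \<omega> = Wset W R \<omega>'"
    using W_rest unfolding Wset_eq_iff by blast
  then show "(Wset W R \<omega>, Sset S M' {j} \<omega>) = (Wset W R \<omega>', Sset S M' {j} \<omega>')"
    using S_M' by simp
qed

lemma ent_pair_repair_bound:
  assumes reg: "regen_code n k d B \<alpha> \<beta> p M W S"
    and "R \<subseteq> {1..n}" "M' \<subseteq> {1..n}" "R \<inter> M' = {}" "j \<in> R"
    and "card R + card M' \<le> d" "d < n"
  shows "ent p (\<lambda>\<omega>. (Wset W R \<omega>, Sset S M' {j} \<omega>))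
     \<le> ennreal ((real (card R) - 1) * \<alpha> + (real d - real (card R) + 1) * \<beta>)"
proof -
  obtain D where D: "D \<subseteq> {1..n} - (R \<union> M')" "card D = d + 1 - card R - card M'"
    and cardI: "card ((R - {j}) \<union> M' \<union> D) = d"
    using obtain_extra_helpers[OF assms(2-7)] by blast
  have fin: "finite R" "finite M'" "finite D"
    using finite_subset[OF assms(2)] finite_subset[OF assms(3)] finite_subset[OF D(1)] by simp_all
  have j: "j \<in> {1..n}" "j \<notin> M'" "j \<notin> D" using assms(2,4,5) D(1) by auto
  have ab: "0 \<le> \<alpha>" "0 \<le> \<beta>" using regen_code_nonneg[OF reg] by auto
  have msg: "ent p (S i j) \<le> ennreal \<beta>" if "i \<in> {1..n}" "i \<noteq> j" for i
    using regen_code_ent_S[OF reg that(1) j(1) that(2)] by simp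
  have "ent p (\<lambda>\<omega>. (Wset W R \<omega>, Sset S M' {j} \<omega>))
      \<le> ent p (\<lambda>\<omega>. (Wset W (R - {j}) \<omega>, Sset S M' {j} \<omega>, Sset S D {j} \<omega>))"
    by (rule ent_mono_determined, rule repair_inputs_determine[OF reg assms(2,5)])
       (use assms(3) D j cardI in auto)
  also have "\<dots> \<le> ent p (Wset W (R - {j})) + (ent p (Sset S M' {j}) + ent p (Sset S D {j}))"
    by (rule order_trans[OF ent_pair_subadditive add_left_mono[OF ent_pair_subadditive]])
  also have "\<dots> \<le> ennreal (real (card (R - {j})) * \<alpha>)
                 + (ennreal (real (card M') * \<beta>) + ennreal (real (card D) * \<beta>))"
    using fin ab j assms(2,3) D(1) regen_code_ent_W[OF reg]
    by (intro add_mono ent_Wset_le ent_Sset_le) (auto intro!: msg)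
  also have "\<dots> = ennreal ((real (card R) - 1) * \<alpha> + (real d - real (card R) + 1) * \<beta>)"
  proof -
    have "card R \<ge> 1" using fin(1) assms(5) by (auto simp: Suc_le_eq card_gt_0_iff)
    then have cR: "real (card (R - {j})) = real (card R) - 1" using fin assms(5) by (simp add: of_nat_diff)
    have cD: "real (card D) = real d + 1 - real (card R) - real (card M')" using D(2) assms(6) by simp
    have "real (card (R - {j})) * \<alpha> + (real (card M') * \<beta> + real (card D) * \<beta>)
        = (real (card R) - 1) * \<alpha> + (real d - real (card R) + 1) * \<beta>"
      unfolding cR cD by (simp add: algebra_simps)
    moreover have "ennreal (real (card (R - {j})) * \<alpha>) + (ennreal (real (card M') * \<beta>) + ennreal (real (card D) * \<beta>))
        = ennreal (real (card (R - {j})) * \<alpha> + (real (card M') * \<beta> + real (card D) * \<beta>))"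
      using ab by (simp add: ennreal_plus)
    ultimately show ?thesis by simp
  qed
  finally show ?thesis .
qed

theorem mainTheorem4:
  fixes n k d :: nat and B \<alpha> \<beta> :: real and p :: "'o pmf" and M :: "'o \<Rightarrow> 'm"
    and W :: "nat \<Rightarrow> 'o \<Rightarrow> 'w" and S :: "nat \<Rightarrow> nat \<Rightarrow> 'o \<Rightarrow> 's"
    and L R M' :: "nat set"
  assumes "1 \<le> k" "k \<le> d" "d \<le> n - 1"
    and "regen_code n k d B \<alpha> \<beta> p M W S"
    and "L \<subseteq> R" "R \<subseteq> {1..n}" "M' \<subseteq> {1..n}" "R \<inter> M' = {}"
    and "card L \<ge> 1" "card R + card M' \<le> k"
  shows "cond_ent p (Wset W R) (Wset W M') + of_nat (card L - 1) * ent p (Wset W R)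
           + ent p (Sset S M' L)
         \<le> ennreal (real (card L) * (real (card R) * \<alpha> + \<beta>)
                    + real (card L) * ((real d - real (card R)) * \<beta> - \<alpha>))"
proof -
  define K where "K = (real (card R) - 1) * \<alpha> + (real d - real (card R) + 1) * \<beta>"
  have L: "finite L" "L \<noteq> {}" using assms(9) card_gt_0_iff by force+
  have "determined_by p (Sset S M' L) (Wset W M')"
    using assms(5-7) by (intro Sset_determined_by_Wset regen_code_message_determined[OF assms(4)]) auto
  then have "cond_ent p (Wset W R) (Wset W M') + of_nat (card L - 1) * ent p (Wset W R) + ent p (Sset S M' L)
      \<le> cond_ent p (Wset W R) (Sset S M' L) + of_nat (card L - 1) * ent p (Wset W R) + ent p (Sset S M' L)"
    by (intro add_mono order_refl cond_ent_antimono)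
  also have "\<dots> = ent p (\<lambda>\<omega>. (Wset W R \<omega>, Sset S M' L \<omega>)) + of_nat (card L - 1) * ent p (Wset W R)"
    unfolding ent_pair_chain by (simp add: ac_simps)
  also have "\<dots> \<le> (\<Sum>j\<in>L. ent p (\<lambda>\<omega>. (Wset W R \<omega>, Sset S M' {j} \<omega>)))"
    by (rule ent_pair_Sset_le_sum[OF L])
  also have "\<dots> \<le> (\<Sum>j\<in>L. ennreal K)"
    using assms unfolding K_def by (intro sum_mono ent_pair_repair_bound[OF assms(4,6-8)]) auto
  also have "\<dots> = ennreal (real (card L) * K)"
    by (simp add: ennreal_of_nat_eq_real_of_nat ennreal_mult')
  also have "real (card L) * K = real (card L) * (real (card R) * \<alpha> + \<beta>)
                                + real (card L) * ((real d - real (card R)) * \<beta> - \<alpha>)"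
    unfolding K_def by (simp add: algebra_simps)
  finally show ?thesis .
qed

end
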